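(* Let $e,f$ be essential edges of a multigraph $H$, and let $W$ be any walk in $H$ that starts with $e$, ends with $f$, and traverses every edge at most once. Then every edge traversed by $W$ is essential.
   Context: Multigraphs are undirected and may contain parallel edges and self-loops (a self-loop is a cycle of length one, two parallel edges form a cycle of length two). An edge $e$ of $H$ is essential if it lies on a cycle of $H$, or it is a bridge whose removal creates two new connected components each of which contains a cycle. *)

theory Defs
  imports Main
begin

text \<open>A multigraph is given by a vertex set V, an edge set E (edge names, so parallel
edges are allowed) and an incidence map inc assigning to each edge its set of
end vertices (one vertex for a self-loop, two for an ordinary edge).\<close>

definition multigraph :: "'v set \<Rightarrow> 'e set \<Rightarrow> ('e \<Rightarrow> 'v set) \<Rightarrow> bool" where
  "multigraph V E inc \<longleftrightarrow> finite V \<and> finite E \<and>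
     (\<forall>e\<in>E. inc e \<subseteq> V \<and> 1 \<le> card (inc e) \<and> card (inc e) \<le> 2)"

definition walk :: "'v set \<Rightarrow> 'e set \<Rightarrow> ('e \<Rightarrow> 'v set) \<Rightarrow> 'v list \<Rightarrow> 'e list \<Rightarrow> bool" where
  "walk V E inc vs es \<longleftrightarrow> length vs = length es + 1 \<and> set vs \<subseteq> V \<and> set es \<subseteq> E \<and>
     (\<forall>i<length es. inc (es ! i) = {vs ! i, vs ! Suc i})"

definition reach :: "'v set \<Rightarrow> 'e set \<Rightarrow> ('e \<Rightarrow> 'v set) \<Rightarrow> 'v \<Rightarrow> 'v \<Rightarrow> bool" where
  "reach V E inc u w \<longleftrightarrow> (\<exists>vs es. walk V E inc vs es \<and> hd vs = u \<and> last vs = w)"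

text \<open>A cycle: closed walk with at least one edge, no repeated edge and no repeated
vertex other than start = end (self-loops are cycles of length 1, two parallel
edges form a cycle of length 2).\<close>
definition is_cycle :: "'v set \<Rightarrow> 'e set \<Rightarrow> ('e \<Rightarrow> 'v set) \<Rightarrow> 'v list \<Rightarrow> 'e list \<Rightarrow> bool" where
  "is_cycle V E inc vs es \<longleftrightarrow> walk V E inc vs es \<and> es \<noteq> [] \<and> distinct es \<and>
     hd vs = last vs \<and> distinct (tl vs)"

definition on_cycle :: "'v set \<Rightarrow> 'e set \<Rightarrow> ('e \<Rightarrow> 'v set) \<Rightarrow> 'e \<Rightarrow> bool" where
  "on_cycle V E inc e \<longleftrightarrow> (\<exists>vs es. is_cycle V E inc vs es \<and> e \<in> set es)"

definition component_has_cycle :: "'v set \<Rightarrow> 'e set \<Rightarrow> ('e \<Rightarrow> 'v set) \<Rightarrow> 'v \<Rightarrow> bool" where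
  "component_has_cycle V E inc u \<longleftrightarrow>
     (\<exists>vs es. is_cycle V E inc vs es \<and> (\<forall>w\<in>set vs. reach V E inc u w))"

definition is_bridge :: "'v set \<Rightarrow> 'e set \<Rightarrow> ('e \<Rightarrow> 'v set) \<Rightarrow> 'e \<Rightarrow> bool" where
  "is_bridge V E inc e \<longleftrightarrow> e \<in> E \<and>
     (\<exists>u v. inc e = {u, v} \<and> \<not> reach V (E - {e}) inc u v)"

definition essential :: "'v set \<Rightarrow> 'e set \<Rightarrow> ('e \<Rightarrow> 'v set) \<Rightarrow> 'e \<Rightarrow> bool" where
  "essential V E inc e \<longleftrightarrow> e \<in> E \<and>
     (on_cycle V E inc e \<or>
      (is_bridge V E inc e \<and>
       (\<forall>u v. inc e = {u, v} \<longrightarrow>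
          component_has_cycle V (E - {e}) inc u \<and> component_has_cycle V (E - {e}) inc v)))"

end

theory Submission
  imports Defs
begin

text \<open>
  An edge \<open>g\<close> of the walk with ends \<open>a\<close>, \<open>b\<close> that lies on no cycle is a bridge, since a path
  from \<open>a\<close> to \<open>b\<close> avoiding \<open>g\<close> would close a cycle through \<open>g\<close>. So it suffices to find a cycle
  in the component of \<open>a\<close> in \<open>H - g\<close> (symmetrically for \<open>b\<close>, using the reversed walk and
  \<open>f\<close>). The part of the walk before \<open>g\<close> joins \<open>a\<close> to both ends \<open>u\<close>, \<open>v\<close> of \<open>e\<close> without
  using \<open>g\<close>, and to \<open>v\<close> even without using \<open>e\<close>. If \<open>e\<close> lies on a cycle, that cycle avoids
  \<open>g\<close>. Otherwise \<open>e\<close> is a bridge and the component of \<open>u\<close> in \<open>H - e\<close> contains a cycle; a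
  path from \<open>u\<close> to it cannot pass through \<open>g\<close>, because \<open>g\<close> lies on the side of \<open>v\<close>.
\<close>

definition adjacent :: "('e \<Rightarrow> 'v set) \<Rightarrow> 'e set \<Rightarrow> 'v \<Rightarrow> 'v \<Rightarrow> bool" where
  "adjacent inc S x y \<longleftrightarrow> (\<exists>h\<in>S. inc h = {x, y})"

lemma symp_adjacent: "symp (adjacent inc S)"
  unfolding adjacent_def by (auto intro: sympI simp: insert_commute)

lemma connected_sym:
  "(adjacent inc S)\<^sup>*\<^sup>* x y \<Longrightarrow> (adjacent inc S)\<^sup>*\<^sup>* y x"
  using symp_rtranclp[OF symp_adjacent] by (rule sympD)

lemma adjacent_mono: "S \<subseteq> T \<Longrightarrow> adjacent inc S \<le> adjacent inc T"
  unfolding adjacent_def by auto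

lemma connected_mono:
  "(adjacent inc S)\<^sup>*\<^sup>* x y \<Longrightarrow> S \<subseteq> T \<Longrightarrow> (adjacent inc T)\<^sup>*\<^sup>* x y"
  using rtranclp_mono[OF adjacent_mono] by (metis predicate2D)

lemma walk_Cons:
  "walk V E inc (v # vs) (h # es) \<longleftrightarrow>
     v \<in> V \<and> h \<in> E \<and> inc h = {v, hd vs} \<and> walk V E inc vs es"
  by (cases vs) (auto simp: walk_def less_Suc_eq_0_disj)

lemma walk_drop:
  "walk V E inc vs es \<Longrightarrow> i \<le> length es \<Longrightarrow> walk V E inc (drop i vs) (drop i es)"
  unfolding walk_def by (auto dest: in_set_dropD)

lemma walk_rev:
  assumes "walk V E inc vs es"
  shows "walk V E inc (rev vs) (rev es)"
proof -
  have "inc (rev es ! i) = {rev vs ! i, rev vs ! Suc i}" if "i < length es" for i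
  proof -
    define j where "j = length es - Suc i"
    have "j < length es" "rev es ! i = es ! j" "rev vs ! i = vs ! Suc j" "rev vs ! Suc i = vs ! j"
      using assms that unfolding j_def walk_def by (auto simp: rev_nth Suc_diff_Suc)
    then show ?thesis
      using assms unfolding walk_def by (auto simp: insert_commute)
  qed
  then show ?thesis
    using assms unfolding walk_def by auto
qed

lemma walk_segment_connected:
  assumes "walk V E inc vs es" "i \<le> j" "j \<le> length es"
  shows "(adjacent inc (nth es ` {i..<j}))\<^sup>*\<^sup>* (vs ! i) (vs ! j)"
  using assms(2,3)
proof (induction j rule: dec_induct)
  case base
  then show ?case by simp
next
  case (step j)
  then have "(adjacent inc (nth es ` {i..<Suc j}))\<^sup>*\<^sup>* (vs ! i) (vs ! j)"
    by (auto intro: connected_mono)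
  moreover have "adjacent inc (nth es ` {i..<Suc j}) (vs ! j) (vs ! Suc j)"
    using step assms(1) unfolding walk_def adjacent_def by auto
  ultimately show ?case by (rule rtranclp.rtrancl_into_rtrancl)
qed

lemma distinct_walk_segment_connected:
  assumes "walk V E inc vs es" "distinct es" "i \<le> j" "j \<le> length es"
    and "L \<subseteq> {..<length es} - {i..<j}"
  shows "(adjacent inc (E - nth es ` L))\<^sup>*\<^sup>* (vs ! i) (vs ! j)"
proof -
  have "nth es ` {i..<j} \<inter> nth es ` L = {}"
    using assms(2,4,5) by (auto simp: nth_eq_iff_index_eq subset_iff)
  moreover have "nth es ` {i..<j} \<subseteq> E"
    using assms(1,4) unfolding walk_def by auto
  ultimately have "nth es ` {i..<j} \<subseteq> E - nth es ` L"
    by auto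
  with walk_segment_connected[OF assms(1,3,4)] show ?thesis
    by (rule connected_mono)
qed

lemma walk_distinct_edges:
  assumes "walk V E inc vs es" "distinct vs"
  shows "distinct es"
  unfolding distinct_conv_nth
proof (intro allI impI)
  fix i j assume ij: "i < length es" "j < length es" "i \<noteq> j"
  have inc: "inc (es ! l) = {vs ! l, vs ! Suc l}" if "l < length es" for l
    using assms(1) that unfolding walk_def by auto
  have "vs ! i \<notin> inc (es ! j) \<or> vs ! j \<notin> inc (es ! i)"
    using assms ij by (cases "i < j") (auto simp: inc walk_def nth_eq_iff_index_eq)
  then show "es ! i \<noteq> es ! j"
    using inc[OF ij(1)] inc[OF ij(2)] by auto
qed

lemma walk_edge_endpoints:
  "walk V E inc vs es \<Longrightarrow> h \<in> set es \<Longrightarrow> inc h \<subseteq> set vs"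
  unfolding walk_def in_set_conv_nth by (auto 4 3)

lemma walk_connected:
  assumes "walk V S inc vs es" "x \<in> set vs"
  shows "(adjacent inc S)\<^sup>*\<^sup>* (hd vs) x"
proof -
  obtain j where j: "j \<le> length es" "x = vs ! j"
    using assms unfolding walk_def in_set_conv_nth by (metis Suc_eq_plus1 less_Suc_eq_le)
  have "hd vs = vs ! 0"
    using assms(2) by (cases vs) auto
  moreover have "nth es ` {0..<j} \<subseteq> S"
    using assms(1) j(1) unfolding walk_def by auto
  ultimately show ?thesis
    using walk_segment_connected[OF assms(1) le0 j(1)] j(2) connected_mono by metis
qed

lemma connected_imp_path:
  assumes "(adjacent inc S)\<^sup>*\<^sup>* u w" "u \<in> V" "\<forall>h\<in>S. inc h \<subseteq> V"
  shows "\<exists>vs es. walk V S inc vs es \<and> hd vs = u \<and> last vs = w \<and> distinct vs"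
  using assms(1,2)
proof (induction rule: converse_rtranclp_induct)
  case base
  then have "walk V S inc [w] []"
    by (simp add: walk_def)
  then show ?case
    by fastforce
next
  case (step u y)
  then obtain h where h: "h \<in> S" "inc h = {u, y}"
    unfolding adjacent_def by auto
  then obtain ps pes where p: "walk V S inc ps pes" "hd ps = y" "last ps = w" "distinct ps"
    using step assms(3) by blast
  have "ps \<noteq> []"
    using p(1) unfolding walk_def by auto
  show ?case
  proof (cases "u \<in> set ps")
    case False
    then have "walk V S inc (u # ps) (h # pes)"
      using p h step.prems by (simp add: walk_Cons)
    then show ?thesis
      using False p \<open>ps \<noteq> []\<close> by fastforce
  next
    case True
    then obtain xs ys where ps: "ps = xs @ u # ys"
      by (meson split_list)
    then have "walk V S inc (u # ys) (drop (length xs) pes)"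
      using walk_drop[OF p(1), of "length xs"] p(1) by (auto simp: walk_def)
    then show ?thesis
      using p ps by fastforce
  qed
qed

lemma reach_iff_connected:
  assumes "\<forall>h\<in>S. inc h \<subseteq> V"
  shows "reach V S inc u w \<longleftrightarrow> u \<in> V \<and> (adjacent inc S)\<^sup>*\<^sup>* u w"
proof
  assume "reach V S inc u w"
  then obtain vs es where w: "walk V S inc vs es" "hd vs = u" "last vs = w"
    unfolding reach_def by blast
  then have "vs \<noteq> []" "set vs \<subseteq> V"
    unfolding walk_def by auto
  then show "u \<in> V \<and> (adjacent inc S)\<^sup>*\<^sup>* u w"
    using w walk_connected[OF w(1) last_in_set] by auto
next
  assume "u \<in> V \<and> (adjacent inc S)\<^sup>*\<^sup>* u w"
  then show "reach V S inc u w"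
    using connected_imp_path assms unfolding reach_def by metis
qed

lemma connected_avoids_or_reaches_edge:
  assumes "(adjacent inc S)\<^sup>*\<^sup>* x y"
  shows "(adjacent inc (S - {g}))\<^sup>*\<^sup>* x y \<or> (\<exists>c\<in>inc g. (adjacent inc (S - {g}))\<^sup>*\<^sup>* x c)"
  using assms
proof (induction rule: rtranclp_induct)
  case base
  then show ?case by simp
next
  case (step y z)
  then obtain h where h: "h \<in> S" "inc h = {y, z}"
    unfolding adjacent_def by auto
  show ?case
  proof (cases "h = g")
    case True
    then show ?thesis using step h by auto
  next
    case False
    then have "adjacent inc (S - {g}) y z"
      using h unfolding adjacent_def by auto
    then show ?thesis
      using step.IH by (meson rtranclp.rtrancl_into_rtrancl)
  qed
qed

lemma not_on_cycle_disconnects: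
  assumes "\<forall>h\<in>E. inc h \<subseteq> V" "g \<in> E" "inc g = {a, b}" "\<not> on_cycle V E inc g"
  shows "\<not> (adjacent inc (E - {g}))\<^sup>*\<^sup>* a b"
proof
  assume "(adjacent inc (E - {g}))\<^sup>*\<^sup>* a b"
  moreover have "a \<in> V" "b \<in> V"
    using assms(1-3) by auto
  ultimately obtain ps pes where
    p: "walk V (E - {g}) inc ps pes" "hd ps = a" "last ps = b" "distinct ps"
    using connected_imp_path[of inc "E - {g}"] assms(1) by blast
  have "walk V E inc ps pes"
    using p(1) unfolding walk_def by auto
  then have "walk V E inc (b # ps) (g # pes)"
    using assms(2,3) p(2) \<open>b \<in> V\<close> by (simp add: walk_Cons insert_commute)
  moreover have "distinct (g # pes)"
    using p(1) walk_distinct_edges[OF p(1,4)] unfolding walk_def by auto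
  moreover have "ps \<noteq> []"
    using p(1) unfolding walk_def by auto
  ultimately have "is_cycle V E inc (b # ps) (g # pes)"
    using p unfolding is_cycle_def by auto
  then show False
    using assms(4) unfolding on_cycle_def by fastforce
qed

lemma is_cycle_avoiding:
  assumes "is_cycle V E inc vs es" "\<not> on_cycle V E inc g"
  shows "is_cycle V (E - {g}) inc vs es"
proof -
  have "g \<notin> set es"
    using assms unfolding on_cycle_def by blast
  then show ?thesis
    using assms(1) unfolding is_cycle_def walk_def by blast
qed

lemma component_has_cycleI:
  assumes "\<forall>h\<in>S. inc h \<subseteq> V" "is_cycle V S inc vs es"
    and "u \<in> V" "(adjacent inc S)\<^sup>*\<^sup>* u x" "x \<in> set vs"
  shows "component_has_cycle V S inc u"
proof -
  have "walk V S inc vs es"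
    using assms(2) unfolding is_cycle_def by auto
  then have "(adjacent inc S)\<^sup>*\<^sup>* u w" if "w \<in> set vs" for w
    using assms(4,5) that walk_connected connected_sym by (metis rtranclp_trans)
  then show ?thesis
    using assms reach_iff_connected unfolding component_has_cycle_def by metis
qed

lemma is_cycle_mono:
  "is_cycle V S inc vs es \<Longrightarrow> S \<subseteq> T \<Longrightarrow> is_cycle V T inc vs es"
  unfolding is_cycle_def walk_def by auto

lemma is_bridge_disconnects:
  assumes "\<forall>h\<in>E. inc h \<subseteq> V" "is_bridge V E inc e" "inc e = {u, v}"
  shows "\<not> (adjacent inc (E - {e}))\<^sup>*\<^sup>* u v"
proof -
  obtain p q where pq: "e \<in> E" "inc e = {p, q}" "\<not> reach V (E - {e}) inc p q"
    using assms(2) unfolding is_bridge_def by blast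
  then have "\<not> (adjacent inc (E - {e}))\<^sup>*\<^sup>* p q"
    using reach_iff_connected[of "E - {e}" inc V] assms(1) by auto
  then show ?thesis
    using pq(2) assms(3) connected_sym by (metis doubleton_eq_iff)
qed

lemma connected_avoids_edge_of_other_component:
  assumes "\<not> (adjacent inc S)\<^sup>*\<^sup>* u v" "(adjacent inc S)\<^sup>*\<^sup>* a v"
    and "g \<in> S" "inc g = {a, b}" "(adjacent inc S)\<^sup>*\<^sup>* u x"
  shows "(adjacent inc (S - {g}))\<^sup>*\<^sup>* u x"
  using connected_avoids_or_reaches_edge[OF assms(5), of g]
proof
  assume "\<exists>c\<in>inc g. (adjacent inc (S - {g}))\<^sup>*\<^sup>* u c"
  then obtain c where "c \<in> {a, b}" "(adjacent inc S)\<^sup>*\<^sup>* u c"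
    using assms(4) connected_mono[of inc "S - {g}" u _ S] by blast
  moreover have "adjacent inc S b a"
    using assms(3,4) unfolding adjacent_def by (auto simp: insert_commute)
  ultimately have "(adjacent inc S)\<^sup>*\<^sup>* u a"
    by (metis empty_iff insertE rtranclp.rtrancl_into_rtrancl)
  then show ?thesis
    using assms(1,2) by (meson rtranclp_trans)
qed

lemma component_has_cycle_connected:
  assumes "\<forall>h\<in>S. inc h \<subseteq> V" "a \<in> V" "(adjacent inc S)\<^sup>*\<^sup>* a u"
    and "component_has_cycle V S inc u"
  shows "component_has_cycle V S inc a"
proof -
  obtain vs es where cyc: "is_cycle V S inc vs es" and reach: "\<forall>w\<in>set vs. reach V S inc u w"
    using assms(4) unfolding component_has_cycle_def by blast
  then have "vs \<noteq> []"
    unfolding is_cycle_def walk_def by auto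
  then have "(adjacent inc S)\<^sup>*\<^sup>* u (hd vs)"
    using reach reach_iff_connected[OF assms(1)] by auto
  with assms(3) have "(adjacent inc S)\<^sup>*\<^sup>* a (hd vs)"
    by (rule rtranclp_trans)
  then show ?thesis
    using component_has_cycleI[OF assms(1) cyc assms(2)] \<open>vs \<noteq> []\<close> by simp
qed

lemma component_has_cycle_at_essential_edge:
  assumes incV: "\<forall>h\<in>E. inc h \<subseteq> V" and ess: "essential V E inc e" and inc_e: "inc e = {u, v}"
    and g: "g \<in> E - {e}" "inc g = {a, b}" "\<not> on_cycle V E inc g"
    and av: "(adjacent inc (E - {e}))\<^sup>*\<^sup>* a v"
  shows "component_has_cycle V (E - {g}) inc u"
proof -
  have incVg: "\<forall>h\<in>E - {g}. inc h \<subseteq> V" and "u \<in> V"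
    using incV ess inc_e unfolding essential_def by auto
  from ess consider (cycle) "on_cycle V E inc e"
    | (bridge) "is_bridge V E inc e" "component_has_cycle V (E - {e}) inc u"
    using inc_e unfolding essential_def by blast
  then show ?thesis
  proof cases
    case cycle
    then obtain cvs ces where "is_cycle V E inc cvs ces" "e \<in> set ces"
      unfolding on_cycle_def by blast
    moreover from this have "u \<in> set cvs"
      using walk_edge_endpoints inc_e unfolding is_cycle_def by fastforce
    ultimately show ?thesis
      using component_has_cycleI[OF incVg is_cycle_avoiding \<open>u \<in> V\<close>] g(3) by blast
  next
    case bridge
    obtain cvs ces where cyc: "is_cycle V (E - {e}) inc cvs ces"
      and reach: "\<forall>w\<in>set cvs. reach V (E - {e}) inc u w"
      using bridge(2) unfolding component_has_cycle_def by blast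
    have "cvs \<noteq> []"
      using cyc unfolding is_cycle_def walk_def by auto
    then have "(adjacent inc (E - {e}))\<^sup>*\<^sup>* u (hd cvs)"
      using reach reach_iff_connected[of "E - {e}" inc V] incV by auto
    then have "(adjacent inc (E - {e} - {g}))\<^sup>*\<^sup>* u (hd cvs)"
      using connected_avoids_edge_of_other_component[OF is_bridge_disconnects[OF incV bridge(1) inc_e]]
        av g by blast
    then have "(adjacent inc (E - {g}))\<^sup>*\<^sup>* u (hd cvs)"
      by (rule connected_mono) blast
    moreover have "is_cycle V (E - {g}) inc cvs ces"
      using is_cycle_mono[OF cyc] g(3) by (blast intro: is_cycle_avoiding)
    ultimately show ?thesis
      using component_has_cycleI[OF incVg _ \<open>u \<in> V\<close>] hd_in_set[OF \<open>cvs \<noteq> []\<close>] by blast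
  qed
qed

lemma component_has_cycle_near_essential_edge:
  assumes "\<forall>h\<in>E. inc h \<subseteq> V" "essential V E inc e" "inc e = {u, v}"
    and "g \<in> E" "g \<noteq> e" "inc g = {a, b}" "\<not> on_cycle V E inc g"
    and "(adjacent inc (E - {e, g}))\<^sup>*\<^sup>* v a"
  shows "component_has_cycle V (E - {g}) inc a"
proof -
  have "e \<in> E" "a \<in> V"
    using assms(1,2,4,6) unfolding essential_def by auto
  have av: "(adjacent inc (E - {e}))\<^sup>*\<^sup>* a v" "(adjacent inc (E - {g}))\<^sup>*\<^sup>* a v"
    using connected_sym[OF assms(8)] by (auto elim: connected_mono)
  have "adjacent inc (E - {g}) v u"
    using \<open>e \<in> E\<close> assms(3,5) unfolding adjacent_def by (auto simp: insert_commute)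
  with av(2) have "(adjacent inc (E - {g}))\<^sup>*\<^sup>* a u"
    by (rule rtranclp.rtrancl_into_rtrancl)
  moreover have "component_has_cycle V (E - {g}) inc u"
    using component_has_cycle_at_essential_edge[OF assms(1-3) _ assms(6,7) av(1)] assms(4,5) by blast
  ultimately show ?thesis
    using component_has_cycle_connected[of "E - {g}" inc V a u] assms(1) \<open>a \<in> V\<close> by blast
qed

lemma essential_if_not_on_cycle:
  assumes "\<forall>h\<in>E. inc h \<subseteq> V" "g \<in> E" "inc g = {a, b}" "\<not> on_cycle V E inc g"
    and "component_has_cycle V (E - {g}) inc a" "component_has_cycle V (E - {g}) inc b"
  shows "essential V E inc g"
proof -
  have "\<forall>h\<in>E - {g}. inc h \<subseteq> V"
    using assms(1) by blast
  then have "\<not> reach V (E - {g}) inc a b"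
    using not_on_cycle_disconnects[OF assms(1-4)] by (simp add: reach_iff_connected)
  then have "is_bridge V E inc g"
    using assms(2,3) unfolding is_bridge_def by blast
  then show ?thesis
    using assms(2,3,5,6) unfolding essential_def by (metis doubleton_eq_iff)
qed

lemma component_has_cycle_along_walk:
  assumes "\<forall>h\<in>E. inc h \<subseteq> V" "walk V E inc vs es" "distinct es"
    and "essential V E inc (es ! 0)" "0 < k" "k < length es" "\<not> on_cycle V E inc (es ! k)"
  shows "component_has_cycle V (E - {es ! k}) inc (vs ! k)"
proof -
  have edge: "inc (es ! i) = {vs ! i, vs ! Suc i}" "es ! i \<in> E" if "i < length es" for i
    using assms(2) that unfolding walk_def by auto
  have "0 < length es"
    using assms(5,6) by linarith
  then have inc: "inc (es ! 0) = {vs ! 0, vs ! 1}" "inc (es ! k) = {vs ! k, vs ! Suc k}"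
    and "es ! k \<in> E"
    using edge assms(6) by auto
  moreover have "es ! k \<noteq> es ! 0"
    using nth_eq_iff_index_eq[OF assms(3,6) \<open>0 < length es\<close>] assms(5) by simp
  moreover have "(adjacent inc (E - {es ! 0, es ! k}))\<^sup>*\<^sup>* (vs ! 1) (vs ! k)"
    using distinct_walk_segment_connected[OF assms(2,3), of 1 k "{0, k}"] assms(5,6)
      \<open>0 < length es\<close> by auto
  ultimately show ?thesis
    using component_has_cycle_near_essential_edge[OF assms(1,4) inc(1)] assms(7) by blast
qed

theorem lemma5p2:
  fixes V :: "'v set" and E :: "'e set" and inc :: "'e \<Rightarrow> 'v set"
  assumes "multigraph V E inc"
    and "essential V E inc e" and "essential V E inc f"
    and "walk V E inc vs es" and "es \<noteq> []" and "hd es = e" and "last es = f"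
    and "distinct es"
  shows "\<forall>g\<in>set es. essential V E inc g"
proof
  fix g assume "g \<in> set es"
  then obtain k where k: "k < length es" "g = es ! k"
    by (auto simp: in_set_conv_nth)
  define k' where "k' = length es - Suc k"
  have incV: "\<forall>h\<in>E. inc h \<subseteq> V"
    using assms(1) unfolding multigraph_def by blast
  have g: "g \<in> E" "inc g = {vs ! k, vs ! Suc k}"
    using assms(4) k unfolding walk_def by auto
  have e: "es ! 0 = e" and f: "rev es ! 0 = f"
    using assms(5-7) by (auto simp: hd_conv_nth last_conv_nth rev_nth)
  have rev: "rev es ! k' = g" "rev vs ! k' = vs ! Suc k" "k' < length (rev es)"
    using assms(4) k unfolding k'_def walk_def by (auto simp: rev_nth)
  show "essential V E inc g"
  proof (cases "g = e \<or> g = f \<or> on_cycle V E inc g")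
    case True
    then show ?thesis
      using assms(2,3) g(1) unfolding essential_def by auto
  next
    case False
    then have "0 < k" "0 < k'" and nc: "\<not> on_cycle V E inc g"
      using e f k rev by (metis gr0I)+
    have "component_has_cycle V (E - {g}) inc (vs ! k)"
      using component_has_cycle_along_walk[OF incV assms(4,8) _ \<open>0 < k\<close> k(1)] assms(2) e k nc
      by simp
    moreover have "component_has_cycle V (E - {g}) inc (vs ! Suc k)"
      using component_has_cycle_along_walk[OF incV walk_rev[OF assms(4)] _ _ \<open>0 < k'\<close> rev(3)]
        assms(3,8) f rev nc by simp
    ultimately show ?thesis
      using essential_if_not_on_cycle[OF incV g nc] by blast
  qed
qed

end
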